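(* Let $p\geq 2$ be an integer, $r=\lceil\log_2(p-1)\rceil$, and $m\geq 2r+2$. Let $b,c\geq 1$ be integers with $b+c\leq r+1$. Then the number of columns $v\in\{0,1,2\}^m$ for which there are sets $I,J\subseteq[m]$ with $|I|=c$, $|J|=b$, $\max I<\min J$, such that the set of marks of $v$ is exactly $I\times J$ and every pair in $I\times J$ is scarce, is at most $2^r(r-b-c+1)+2^{b+c-2}\leq r2^r$.
   Context: For a column $v\in\{0,1,2\}^m$, a mark of $v$ is a pair $(i,j)$ with $1\leq i<j\leq m$, $v_i=0$ and $v_j=1$ (a 0 above a 1). A pair $(i,j)$ with $1\leq i<j\leq m$ is scarce if $2^{m-1+i-j}<p-1$. *)

theory Defs
  imports Complex_Main
begin

text \<open>A column v in {0,1,2}^m is a list of length m with entries in {0,1,2};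
  the entry v_i (1-based, 1 \<le> i \<le> m) is v ! (i - 1).\<close>

definition column :: "nat \<Rightarrow> nat list \<Rightarrow> bool" where
  "column m v \<longleftrightarrow> length v = m \<and> set v \<subseteq> {0,1,2}"

definition marks :: "nat \<Rightarrow> nat list \<Rightarrow> (nat \<times> nat) set" where
  "marks m v = {(i,j). 1 \<le> i \<and> i < j \<and> j \<le> m \<and> v ! (i - 1) = 0 \<and> v ! (j - 1) = 1}"

definition scarce :: "nat \<Rightarrow> nat \<Rightarrow> nat \<Rightarrow> nat \<Rightarrow> bool" where
  "scarce p m i j \<longleftrightarrow> 1 \<le> i \<and> i < j \<and> j \<le> m \<and>
     (2::int) ^ (m - 1 + i - j) < int p - 1"

end

theory Submission
  imports Defs
begin

text \<open>A column whose marks form \<open>I \<times> J\<close> is determined by the corner \<open>a = Max I\<close>,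
  \<open>d = Min J\<close> and the set of positions not holding 2: every position strictly between \<open>a\<close> and
  \<open>d\<close> holds 2, and among the remaining positions \<open>I\<close> consists of the \<open>c\<close> largest ones up
  to \<open>a\<close> and \<open>J\<close> of the \<open>b\<close> smallest ones from \<open>d\<close> on. With \<open>L = a\<close> and
  \<open>R = m + 1 - d\<close>, scarcity of \<open>(a, d)\<close> means \<open>L + R \<le> r + 1\<close>, and the non-2 positions
  other than \<open>a\<close>, \<open>d\<close> form a subset of \<open>L + R - 2\<close> positions. Summing \<open>2^(L + R - 2)\<close> over
  \<open>L \<ge> c\<close>, \<open>R \<ge> b\<close>, \<open>L + R \<le> r + 1\<close> gives the bound.\<close>

lemma sum_power2_antidiagonal:
  "(\<Sum>(i, j)\<in>{(i, j). i + j = n}. (2::nat) ^ (i + j)) = (n + 1) * 2 ^ n"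
proof -
  have "{(i, j). i + j = n} = (\<lambda>i. (i, n - i)) ` {..n}"
    by (auto simp: image_iff)
  moreover have "inj_on (\<lambda>i. (i, n - i)) {..n}"
    by (auto intro: inj_onI)
  ultimately show ?thesis
    by (simp add: sum.reindex)
qed

lemma sum_power2_triangle:
  "(\<Sum>(i, j)\<in>{(i, j). i + j \<le> k}. (2::nat) ^ (i + j)) = k * 2 ^ (k + 1) + 1"
proof (induction k)
  case 0
  then show ?case by simp
next
  case (Suc k)
  have finite: "finite {(i, j). i + j \<le> n}" for n :: nat
    by (rule finite_subset[of _ "{..n} \<times> {..n}"]) auto
  have "{(i, j). i + j \<le> Suc k} = {(i, j). i + j \<le> k} \<union> {(i, j). i + j = Suc k}"
    by auto
  then have "(\<Sum>(i, j)\<in>{(i, j). i + j \<le> Suc k}. (2::nat) ^ (i + j))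
      = (\<Sum>(i, j)\<in>{(i, j). i + j \<le> k}. 2 ^ (i + j))
        + (\<Sum>(i, j)\<in>{(i, j). i + j = Suc k}. 2 ^ (i + j))"
    by (simp add: sum.union_disjoint finite finite_subset[OF _ finite[of "Suc k"]] disjoint_iff)
  also have "\<dots> = Suc k * 2 ^ (Suc k + 1) + 1"
    by (simp only: Suc.IH sum_power2_antidiagonal) (simp add: algebra_simps)
  finally show ?case .
qed

lemma sum_power2_staircase:
  fixes b c r :: nat
  assumes "1 \<le> b" "1 \<le> c" "b + c \<le> r + 1"
  shows "(\<Sum>(L, R)\<in>{(L, R). c \<le> L \<and> b \<le> R \<and> L + R \<le> r + 1}. (2::nat) ^ (L + R - 2))
    = 2 ^ r * (r + 1 - b - c) + 2 ^ (b + c - 2)"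
proof -
  define k where "k = r + 1 - b - c"
  have "(\<Sum>(L, R)\<in>{(L, R). c \<le> L \<and> b \<le> R \<and> L + R \<le> r + 1}. (2::nat) ^ (L + R - 2))
      = (\<Sum>(i, j)\<in>{(i, j). i + j \<le> k}. 2 ^ (b + c - 2) * 2 ^ (i + j))"
    using assms unfolding k_def
    by (intro sum.reindex_bij_witness[of _ "\<lambda>(i, j). (i + c, j + b)" "\<lambda>(L, R). (L - c, R - b)"])
      (auto simp flip: power_add)
  also have "\<dots> = 2 ^ (b + c - 2) * (\<Sum>(i, j)\<in>{(i, j). i + j \<le> k}. 2 ^ (i + j))"
    by (simp add: sum_distrib_left case_prod_unfold)
  also have "\<dots> = 2 ^ (b + c - 2) * (k * 2 ^ (k + 1) + 1)"
    by (simp only: sum_power2_triangle)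
  also have "\<dots> = 2 ^ (b + c - 2 + (k + 1)) * k + 2 ^ (b + c - 2)"
    by (simp add: algebra_simps power_add)
  also have "b + c - 2 + (k + 1) = r"
    using assms unfolding k_def by simp
  finally show ?thesis
    unfolding k_def .
qed

lemma staircase_bound_le:
  fixes b c r :: nat
  assumes "1 \<le> b" "1 \<le> c" "b + c \<le> r + 1"
  shows "2 ^ r * (r + 1 - b - c) + 2 ^ (b + c - 2) \<le> r * (2::nat) ^ r"
proof -
  have "(2::nat) ^ (b + c - 2) \<le> 2 ^ r"
    using assms by (intro power_increasing) auto
  also have "\<dots> \<le> (b + c - 1) * 2 ^ r"
    using assms by simp
  finally have "2 ^ r * (r + 1 - b - c) + 2 ^ (b + c - 2) \<le> ((r + 1 - b - c) + (b + c - 1)) * (2::nat) ^ r"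
    by (simp add: algebra_simps)
  also have "(r + 1 - b - c) + (b + c - 1) = r"
    using assms by simp
  finally show ?thesis .
qed

lemma le_power2_ceiling_log2:
  assumes "1 \<le> x"
  shows "x \<le> 2 ^ nat \<lceil>log 2 x\<rceil>"
proof -
  have "x = 2 powr log 2 x"
    using assms by simp
  also have "\<dots> \<le> 2 powr nat \<lceil>log 2 x\<rceil>"
    by (intro powr_mono) linarith+
  finally show ?thesis
    by (simp add: powr_realpow)
qed

lemma scarce_corner_gap:
  assumes "int p - 1 \<le> 2 ^ r"
    and "finite I" "I \<noteq> {}" "finite J" "J \<noteq> {}" "\<forall>(i, j)\<in>I \<times> J. scarce p m i j"
  shows "m + Max I \<le> r + Min J"
proof -
  have "scarce p m (Max I) (Min J)"
    using assms(2-6) by simp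
  then have ij: "1 \<le> Max I" "Max I < Min J" "Min J \<le> m"
    and "(2::int) ^ (m - 1 + Max I - Min J) < int p - 1"
    unfolding scarce_def by auto
  then have "(2::int) ^ (m - 1 + Max I - Min J) < 2 ^ r"
    using assms(1) by linarith
  then have "m - 1 + Max I - Min J < r"
    by simp
  with ij show ?thesis
    by linarith
qed

lemma closed_subsets_eq_if_card_eq:
  fixes R :: "'a \<Rightarrow> 'a \<Rightarrow> bool"
  assumes "finite Q" "Z \<subseteq> Q" "Z' \<subseteq> Q" "card Z = card Z'"
    and total: "\<And>x y. x \<noteq> y \<Longrightarrow> R x y \<or> R y x"
    and closed: "\<And>z q. z \<in> Z \<Longrightarrow> q \<in> Q \<Longrightarrow> R z q \<Longrightarrow> q \<in> Z"
    and closed': "\<And>z q. z \<in> Z' \<Longrightarrow> q \<in> Q \<Longrightarrow> R z q \<Longrightarrow> q \<in> Z'"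
  shows "Z = Z'"
proof -
  have "Z \<subseteq> Z' \<or> Z' \<subseteq> Z"
  proof (rule ccontr)
    assume "\<not> ?thesis"
    then obtain x y where "x \<in> Z - Z'" "y \<in> Z' - Z"
      by blast
    then show False
      using total[of x y] closed closed' assms(2,3) by blast
  qed
  then show ?thesis
    using assms(1-4) by (metis card_subset_eq finite_subset)
qed

lemma mem_marks_iff:
  "(i, j) \<in> marks m v \<longleftrightarrow> 1 \<le> i \<and> i < j \<and> j \<le> m \<and> v ! (i - 1) = 0 \<and> v ! (j - 1) = 1"
  by (simp add: marks_def)

lemma column_nth:
  assumes "column m v" "1 \<le> i" "i \<le> m"
  shows "v ! (i - 1) \<in> {0, 1, 2}"
proof -
  have "v ! (i - 1) \<in> set v"
    using assms unfolding column_def by (intro nth_mem) auto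
  then show ?thesis
    using assms(1) unfolding column_def by blast
qed

lemma finite_columns: "finite {v. column m v}"
  unfolding column_def using finite_lists_length_eq[of "{0, 1, 2 :: nat}" m]
  by (simp add: conj_commute)

definition non_two_positions :: "nat \<Rightarrow> nat list \<Rightarrow> nat set" where
  "non_two_positions m v = {i \<in> {1..m}. v ! (i - 1) \<noteq> 2}"

lemma finite_non_two_positions: "finite (non_two_positions m v)"
  by (simp add: non_two_positions_def)

definition column_code :: "nat \<Rightarrow> nat list \<Rightarrow> (nat \<times> nat) \<times> nat set" where
  "column_code m v =
    (let a = Max (fst ` marks m v); d = Min (snd ` marks m v)
     in ((a, m + 1 - d), non_two_positions m v - {a, d}))"

locale rectangular_marks =
  fixes m :: nat and v :: "nat list" and I J :: "nat set"
  assumes column: "column m v"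
    and I_nonempty: "I \<noteq> {}" and J_nonempty: "J \<noteq> {}"
    and marks_eq: "marks m v = I \<times> J"
begin

lemma mark:
  assumes "i \<in> I" "j \<in> J"
  shows "1 \<le> i" "i < j" "j \<le> m" "v ! (i - 1) = 0" "v ! (j - 1) = 1"
  using assms marks_eq mem_marks_iff[of i j m v] by auto

lemma finite_I: "finite I"
  using mark(1,2,3) J_nonempty by (intro finite_subset[of I "{..m}"]) fastforce+

lemma finite_J: "finite J"
  using mark(3) I_nonempty by (intro finite_subset[of J "{..m}"]) fastforce+

lemma Max_I_mem: "Max I \<in> I"
  using finite_I I_nonempty by simp

lemma Min_J_mem: "Min J \<in> J"
  using finite_J J_nonempty by simp

lemma fst_image_marks: "fst ` marks m v = I"
  using marks_eq J_nonempty by simp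

lemma snd_image_marks: "snd ` marks m v = J"
  using marks_eq I_nonempty by simp

lemma Max_I_less_Min_J: "Max I < Min J"
  using mark(2)[OF Max_I_mem Min_J_mem] .

lemma zero_iff_mem_I:
  assumes "1 \<le> i" "i \<le> Max I"
  shows "v ! (i - 1) = 0 \<longleftrightarrow> i \<in> I"
proof
  assume "v ! (i - 1) = 0"
  then have "(i, Min J) \<in> marks m v"
    using assms Max_I_less_Min_J mark[OF Max_I_mem Min_J_mem] by (simp add: mem_marks_iff)
  then show "i \<in> I"
    using marks_eq by blast
next
  assume "i \<in> I"
  then show "v ! (i - 1) = 0"
    by (rule mark(4)[OF _ Min_J_mem])
qed

lemma one_iff_mem_J:
  assumes "Min J \<le> j" "j \<le> m"
  shows "v ! (j - 1) = 1 \<longleftrightarrow> j \<in> J"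
proof
  assume "v ! (j - 1) = 1"
  then have "(Max I, j) \<in> marks m v"
    using assms Max_I_less_Min_J mark[OF Max_I_mem Min_J_mem] by (simp add: mem_marks_iff)
  then show "j \<in> J"
    using marks_eq by blast
next
  assume "j \<in> J"
  then show "v ! (j - 1) = 1"
    by (rule mark(5)[OF Max_I_mem])
qed

lemma two_between:
  assumes "Max I < i" "i < Min J"
  shows "v ! (i - 1) = 2"
proof -
  have "1 \<le> i" "i \<le> m"
    using assms mark[OF Max_I_mem Min_J_mem] by linarith+
  then have "v ! (i - 1) \<in> {0, 1, 2}"
    by (rule column_nth[OF column])
  moreover have "v ! (i - 1) \<noteq> 0"
  proof
    assume "v ! (i - 1) = 0"
    then have "(i, Min J) \<in> marks m v"
      using assms mark[OF Max_I_mem Min_J_mem] by (simp add: mem_marks_iff)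
    then show False
      using assms marks_eq Max_ge[OF finite_I, of i] by auto
  qed
  moreover have "v ! (i - 1) \<noteq> 1"
  proof
    assume "v ! (i - 1) = 1"
    then have "(Max I, i) \<in> marks m v"
      using assms mark[OF Max_I_mem Min_J_mem] by (simp add: mem_marks_iff)
    then show False
      using assms marks_eq Min_le[OF finite_J, of i] by auto
  qed
  ultimately show ?thesis
    by blast
qed

lemma I_subset: "I \<subseteq> {i \<in> non_two_positions m v. i \<le> Max I}"
proof
  fix i
  assume "i \<in> I"
  then show "i \<in> {i \<in> non_two_positions m v. i \<le> Max I}"
    using mark[OF \<open>i \<in> I\<close> Min_J_mem] finite_I by (auto simp: non_two_positions_def)
qed

lemma J_subset: "J \<subseteq> {j \<in> non_two_positions m v. Min J \<le> j}"
proof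
  fix j
  assume "j \<in> J"
  then show "j \<in> {j \<in> non_two_positions m v. Min J \<le> j}"
    using mark[OF Max_I_mem \<open>j \<in> J\<close>] finite_J by (auto simp: non_two_positions_def)
qed

lemma I_upward_closed:
  assumes "i \<in> I" "i < q" "q \<in> non_two_positions m v" "q \<le> Max I"
  shows "q \<in> I"
proof -
  have "v ! (q - 1) \<noteq> 1"
  proof
    assume "v ! (q - 1) = 1"
    then have "(i, q) \<in> marks m v"
      using assms mark[OF assms(1) Min_J_mem] by (simp add: mem_marks_iff non_two_positions_def)
    then show False
      using assms Max_I_less_Min_J marks_eq Min_le[OF finite_J, of q] by fastforce
  qed
  then have "v ! (q - 1) = 0"
    using assms(3) column_nth[OF column, of q] by (auto simp: non_two_positions_def)
  then show ?thesis
    using assms zero_iff_mem_I by (simp add: non_two_positions_def)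
qed

lemma J_downward_closed:
  assumes "j \<in> J" "q < j" "q \<in> non_two_positions m v" "Min J \<le> q"
  shows "q \<in> J"
proof -
  have "v ! (q - 1) \<noteq> 0"
  proof
    assume "v ! (q - 1) = 0"
    then have "(q, j) \<in> marks m v"
      using assms mark[OF Max_I_mem assms(1)] by (simp add: mem_marks_iff non_two_positions_def)
    then show False
      using assms Max_I_less_Min_J marks_eq Max_ge[OF finite_I, of q] by fastforce
  qed
  then have "v ! (q - 1) = 1"
    using assms(3) column_nth[OF column, of q] by (auto simp: non_two_positions_def)
  then show ?thesis
    using assms one_iff_mem_J by (simp add: non_two_positions_def)
qed

lemma nth_eq:
  assumes "1 \<le> i" "i \<le> m"
  shows "v ! (i - 1) =
    (if i \<notin> non_two_positions m v then 2
     else if i \<le> Max I then (if i \<in> I then 0 else 1)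
     else if i \<in> J then 1 else 0)"
proof (cases "i \<in> non_two_positions m v")
  case True
  then have "v ! (i - 1) \<in> {0, 1}"
    using assms column_nth[OF column] by (auto simp: non_two_positions_def)
  consider "i \<le> Max I" | "Max I < i" "i < Min J" | "Min J \<le> i"
    by linarith
  then show ?thesis
  proof cases
    case 1
    then show ?thesis
      using True \<open>v ! (i - 1) \<in> {0, 1}\<close> zero_iff_mem_I[OF assms(1) 1] by auto
  next
    case 2
    then show ?thesis
      using True two_between by (simp add: non_two_positions_def)
  next
    case 3
    then show ?thesis
      using True \<open>v ! (i - 1) \<in> {0, 1}\<close> one_iff_mem_J[OF 3 assms(2)] Max_I_less_Min_J by auto
  qed
qed (use assms in \<open>simp add: non_two_positions_def\<close>)

lemma card_I_le: "card I \<le> Max I"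
proof -
  have "I \<subseteq> {1..Max I}"
    using I_subset by (auto simp: non_two_positions_def)
  then show ?thesis
    using card_mono[of "{1..Max I}" I] by simp
qed

lemma card_J_le: "card J \<le> m + 1 - Min J"
proof -
  have "J \<subseteq> {Min J..m}"
    using J_subset by (auto simp: non_two_positions_def)
  then show ?thesis
    using card_mono[of "{Min J..m}" J] by simp
qed

lemma non_two_positions_outside_corner:
  "non_two_positions m v - {Max I, Min J} \<subseteq> {1..<Max I} \<union> {Min J<..m}"
proof
  fix i
  assume i: "i \<in> non_two_positions m v - {Max I, Min J}"
  then have "\<not> (Max I < i \<and> i < Min J)"
    using two_between by (auto simp: non_two_positions_def)
  with i show "i \<in> {1..<Max I} \<union> {Min J<..m}"
    by (auto simp: non_two_positions_def)
qed

lemma column_code_eq: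
  "column_code m v = ((Max I, m + 1 - Min J), non_two_positions m v - {Max I, Min J})"
  by (simp add: column_code_def Let_def fst_image_marks snd_image_marks)

lemma column_code_mem:
  assumes "m + Max I \<le> r + Min J"
  shows "column_code m v \<in> (SIGMA (L, R):{(L, R). card I \<le> L \<and> card J \<le> R \<and> L + R \<le> r + 1}.
    Pow ({1..<L} \<union> {m + 1 - R<..m}))"
proof -
  have "Min J \<le> m" "m + 1 - (m + 1 - Min J) = Min J"
    using mark(3)[OF Max_I_mem Min_J_mem] by simp_all
  moreover have "Max I + (m + 1 - Min J) \<le> r + 1"
    using assms \<open>Min J \<le> m\<close> by linarith
  ultimately show ?thesis
    using card_I_le card_J_le non_two_positions_outside_corner by (simp add: column_code_eq)
qed

end

lemma rectangular_marksI:
  assumes "column m v" "1 \<le> card I" "1 \<le> card J" "marks m v = I \<times> J"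
  shows "rectangular_marks m v I J"
  using assms by unfold_locales auto

lemma (in rectangular_marks) column_code_eqD:
  assumes w: "rectangular_marks m w I' J'" and code: "column_code m w = column_code m v"
  shows "Max I' = Max I" "Min J' = Min J" "non_two_positions m w = non_two_positions m v"
proof -
  interpret w: rectangular_marks m w I' J'
    by (rule w)
  have "((Max I', m + 1 - Min J'), non_two_positions m w - {Max I', Min J'})
      = ((Max I, m + 1 - Min J), non_two_positions m v - {Max I, Min J})"
    using code by (simp only: column_code_eq w.column_code_eq)
  then have "Max I' = Max I" "m + 1 - Min J' = m + 1 - Min J"
    and non_two_diff: "non_two_positions m w - {Max I', Min J'} = non_two_positions m v - {Max I, Min J}"
    unfolding prod.inject by blast+
  moreover have "Min J \<le> m" "Min J' \<le> m"
    using mark(3)[OF Max_I_mem Min_J_mem] w.mark(3)[OF w.Max_I_mem w.Min_J_mem] by simp_all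
  ultimately show corner: "Max I' = Max I" "Min J' = Min J"
    by simp_all
  have "{Max I, Min J} \<subseteq> non_two_positions m v"
    using I_subset J_subset Max_I_mem Min_J_mem by auto
  moreover have "{Max I, Min J} \<subseteq> non_two_positions m w"
    using w.I_subset w.J_subset w.Max_I_mem w.Min_J_mem corner by auto
  ultimately show "non_two_positions m w = non_two_positions m v"
    using non_two_diff corner by (metis Diff_partition)
qed

lemma (in rectangular_marks) I_eqI:
  assumes w: "rectangular_marks m w I' J'"
    and "card I' = card I" "Max I' = Max I" "non_two_positions m w = non_two_positions m v"
  shows "I' = I"
proof (rule closed_subsets_eq_if_card_eq[where Q = "{i \<in> non_two_positions m v. i \<le> Max I}"
      and R = "(<)"])
  interpret w: rectangular_marks m w I' J'
    by (rule w)
  show "I' \<subseteq> {i \<in> non_two_positions m v. i \<le> Max I}"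
    using w.I_subset assms by simp
  show "q \<in> I'" if "z \<in> I'" "q \<in> {i \<in> non_two_positions m v. i \<le> Max I}" "z < q" for z q
    using w.I_upward_closed that assms by simp
  show "q \<in> I" if "z \<in> I" "q \<in> {i \<in> non_two_positions m v. i \<le> Max I}" "z < q" for z q
    using I_upward_closed that by blast
qed (use assms I_subset finite_non_two_positions in auto)

lemma (in rectangular_marks) J_eqI:
  assumes w: "rectangular_marks m w I' J'"
    and "card J' = card J" "Min J' = Min J" "non_two_positions m w = non_two_positions m v"
  shows "J' = J"
proof (rule closed_subsets_eq_if_card_eq[where Q = "{j \<in> non_two_positions m v. Min J \<le> j}"
      and R = "\<lambda>x y. y < x"])
  interpret w: rectangular_marks m w I' J'
    by (rule w)
  show "J' \<subseteq> {j \<in> non_two_positions m v. Min J \<le> j}"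
    using w.J_subset assms by simp
  show "q \<in> J'" if "z \<in> J'" "q \<in> {j \<in> non_two_positions m v. Min J \<le> j}" "q < z" for z q
    using w.J_downward_closed that assms by simp
  show "q \<in> J" if "z \<in> J" "q \<in> {j \<in> non_two_positions m v. Min J \<le> j}" "q < z" for z q
    using J_downward_closed that by blast
qed (use assms J_subset finite_non_two_positions in auto)

lemma (in rectangular_marks) column_code_inj:
  assumes w: "rectangular_marks m w I' J'"
    and "card I' = card I" "card J' = card J" and code: "column_code m w = column_code m v"
  shows "w = v"
proof -
  interpret w: rectangular_marks m w I' J'
    by (rule w)
  note corner = column_code_eqD[OF w code]
  have "I' = I" "J' = J"
    using I_eqI[OF w] J_eqI[OF w] corner assms(2,3) by simp_all
  show "w = v"
  proof (rule nth_equalityI)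
    show "length w = length v"
      using column w.column by (simp add: column_def)
    fix k
    assume "k < length w"
    then have "1 \<le> Suc k" "Suc k \<le> m"
      using w.column by (auto simp: column_def)
    then have "w ! (Suc k - 1) = v ! (Suc k - 1)"
      using nth_eq w.nth_eq corner \<open>I' = I\<close> \<open>J' = J\<close> by presburger
    then show "w ! k = v ! k"
      by simp
  qed
qed

lemma card_Pow_ends_le:
  assumes "1 \<le> L" "1 \<le> R"
  shows "card (Pow ({1..<L} \<union> {m + 1 - R<..m})) \<le> 2 ^ (L + R - 2)"
proof -
  have "card ({1..<L} \<union> {m + 1 - R<..m}) \<le> L + R - 2"
    using card_Un_le[of "{1..<L}" "{m + 1 - R<..m}"] assms by simp
  then show ?thesis
    by (simp add: card_Pow power_increasing)
qed

lemma card_Sigma_Pow_ends_le: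
  assumes "finite A" and pos: "\<And>L R. (L, R) \<in> A \<Longrightarrow> 1 \<le> L \<and> 1 \<le> R"
  shows "card (SIGMA (L, R):A. Pow ({1..<L} \<union> {m + 1 - R<..m})) \<le> (\<Sum>(L, R)\<in>A. 2 ^ (L + R - 2))"
proof -
  have "card (SIGMA (L, R):A. Pow ({1..<L} \<union> {m + 1 - R<..m}))
      = (\<Sum>(L, R)\<in>A. card (Pow ({1..<L} \<union> {m + 1 - R<..m})))"
    using assms(1) by (subst card_SigmaI) (auto simp: case_prod_unfold)
  also have "\<dots> \<le> (\<Sum>(L, R)\<in>A. 2 ^ (L + R - 2))"
  proof (rule sum_mono)
    fix x
    assume "x \<in> A"
    then show "(case x of (L, R) \<Rightarrow> card (Pow ({1..<L} \<union> {m + 1 - R<..m})))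
        \<le> (case x of (L, R) \<Rightarrow> 2 ^ (L + R - 2))"
      using pos by (cases x) (simp only: prod.case, rule card_Pow_ends_le, auto)
  qed
  finally show ?thesis .
qed

lemma card_rectangular_columns_le:
  fixes m b c r :: nat
  assumes "1 \<le> b" "1 \<le> c"
  shows "card {v. column m v \<and> (\<exists>I J. card I = c \<and> card J = b \<and> marks m v = I \<times> J \<and>
      m + Max I \<le> r + Min J)}
    \<le> (\<Sum>(L, R)\<in>{(L, R). c \<le> L \<and> b \<le> R \<and> L + R \<le> r + 1}. 2 ^ (L + R - 2))"
  (is "card ?S \<le> (\<Sum>(L, R)\<in>?LR. _)")
proof -
  define T where "T = (SIGMA (L, R):?LR. Pow ({1..<L} \<union> {m + 1 - R<..m}))"
  have "column_code m ` ?S \<subseteq> T"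
  proof (rule image_subsetI)
    fix v
    assume "v \<in> ?S"
    then obtain I J where v: "column m v" "card I = c" "card J = b" "marks m v = I \<times> J"
      and gap: "m + Max I \<le> r + Min J"
      by blast
    then show "column_code m v \<in> T"
      using rectangular_marks.column_code_mem[OF rectangular_marksI[OF v(1) _ _ v(4)] gap] assms
      unfolding T_def by simp
  qed
  moreover have "inj_on (column_code m) ?S"
  proof (rule inj_onI)
    fix v w
    assume "v \<in> ?S" "w \<in> ?S" and code: "column_code m v = column_code m w"
    then obtain I J I' J' where
      v: "column m v" "card I = c" "card J = b" "marks m v = I \<times> J" and
      w: "column m w" "card I' = c" "card J' = b" "marks m w = I' \<times> J'"
      by blast
    show "v = w"
      using rectangular_marks.column_code_inj[OF rectangular_marksI[OF w(1) _ _ w(4)]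
          rectangular_marksI[OF v(1) _ _ v(4)]] v w code assms
      by simp
  qed
  moreover have finite_LR: "finite ?LR"
    by (rule finite_subset[of _ "{..r + 1} \<times> {..r + 1}"]) auto
  then have "finite T"
    unfolding T_def by auto
  ultimately have "card ?S \<le> card T"
    by (intro card_inj_on_le)
  also have "\<dots> \<le> (\<Sum>(L, R)\<in>?LR. 2 ^ (L + R - 2))"
    unfolding T_def using finite_LR assms by (intro card_Sigma_Pow_ends_le) auto
  finally show ?thesis .
qed

theorem mainTheorem8:
  fixes p m b c r :: nat
  assumes "p \<ge> 2"
    and "r = nat \<lceil>log 2 (real p - 1)\<rceil>"
    and "m \<ge> 2 * r + 2"
    and "b \<ge> 1" and "c \<ge> 1" and "b + c \<le> r + 1"
  shows "card {v. column m v \<and>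
            (\<exists>I J. I \<subseteq> {1..m} \<and> J \<subseteq> {1..m} \<and> card I = c \<and> card J = b \<and>
                   Max I < Min J \<and> marks m v = I \<times> J \<and>
                   (\<forall>(i,j)\<in>I \<times> J. scarce p m i j))}
           \<le> 2 ^ r * (r + 1 - b - c) + 2 ^ (b + c - 2)
       \<and> 2 ^ r * (r + 1 - b - c) + 2 ^ (b + c - 2) \<le> r * 2 ^ r"
proof -
  have "real_of_int (int p - 1) \<le> real_of_int (2 ^ r)"
    using assms(1,2) le_power2_ceiling_log2[of "real p - 1"] by simp
  then have p_le: "int p - 1 \<le> 2 ^ r"
    by (simp only: of_int_le_iff)
  let ?S = "{v. column m v \<and>
            (\<exists>I J. I \<subseteq> {1..m} \<and> J \<subseteq> {1..m} \<and> card I = c \<and> card J = b \<and>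
                   Max I < Min J \<and> marks m v = I \<times> J \<and>
                   (\<forall>(i,j)\<in>I \<times> J. scarce p m i j))}"
  let ?S' = "{v. column m v \<and> (\<exists>I J. card I = c \<and> card J = b \<and> marks m v = I \<times> J \<and>
            m + Max I \<le> r + Min J)}"
  have "?S \<subseteq> ?S'"
  proof
    fix v
    assume "v \<in> ?S"
    then obtain I J where v: "column m v" "card I = c" "card J = b" "marks m v = I \<times> J"
      and "\<forall>(i, j)\<in>I \<times> J. scarce p m i j"
      by blast
    moreover have "I \<noteq> {}" "finite I" "J \<noteq> {}" "finite J"
      using v(2,3) assms(4,5) card_gt_0_iff[of I] card_gt_0_iff[of J] by simp_all
    ultimately show "v \<in> ?S'"
      using scarce_corner_gap[OF p_le] by blast
  qed
  then have "card ?S \<le> card ?S'"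
    by (intro card_mono) (rule finite_subset[OF _ finite_columns], blast)
  also have "\<dots> \<le> 2 ^ r * (r + 1 - b - c) + 2 ^ (b + c - 2)"
    using card_rectangular_columns_le[of b c m r] sum_power2_staircase[of b c r] assms(4-6) by simp
  finally show ?thesis
    using staircase_bound_le[of b c r] assms(4-6) by simp
qed

end
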